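(* Let $\varphi$ be a Lagrangian flow associated with $v\in L^2([0,1],H^1_0([0,1]))$, and let $\psi$ be a generalized inverse of $\varphi$ in the space variable, e.g. $\psi(t,y)=\inf\{x\in[0,1]:\varphi(t,x)\ge y\}$. Then the distributional derivative $\partial_{tx}\varphi$ on $D=[0,1]^2$ is a Radon measure, and for every $f\in C^2(D)$, $$\int_D \partial_x v(t,y)\, f(t,\psi(t,y))\,dy\,dt=\langle\partial_{tx}\varphi,f\rangle .$$
   Context: Definition (Lagrangian flow): let $v\in L^1([0,1],C([0,1]))$. A map $\varphi:[0,1]\times[0,1]\to[0,1]$, $(t,x)\mapsto\varphi(t,x)$, is a Lagrangian flow associated with $v$ if (i) $x\mapsto\varphi(t,x)$ is nondecreasing for every $t$, and (ii) for every $x$ the map $t\mapsto\varphi(t,x)$ is absolutely continuous and $\varphi(t,x)-\varphi(s,x)=\int_s^t v(r,\varphi(r,x))\,dr$ for all $0\le s<t\le 1$. *)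

theory Defs
  imports "HOL-Analysis.Analysis"
begin

abbreviation unit_square :: "(real \<times> real) set" where
  "unit_square \<equiv> {0..1} \<times> {0..1}"

definition abs_cont_on :: "real set \<Rightarrow> (real \<Rightarrow> real) \<Rightarrow> bool" where
  "abs_cont_on I g \<longleftrightarrow>
     (\<forall>e>0. \<exists>d>0. \<forall>(n::nat) (a::nat \<Rightarrow> real) b.
        (\<forall>i<n. a i \<in> I \<and> b i \<in> I \<and> a i \<le> b i) \<and>
        (\<forall>i. Suc i < n \<longrightarrow> b i \<le> a (Suc i)) \<and>
        (\<Sum>i<n. b i - a i) < d
        \<longrightarrow> (\<Sum>i<n. \<bar>g (b i) - g (a i)\<bar>) < e)"

text \<open>v (a function of (t,x)) belongs to L^2([0,1],H^1_0([0,1])) with spatial weak derivative w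
  (i.e. w = \<partial>_x v).  Concretely: v and w are (jointly Borel) measurable on [0,1]^2,
  w is square integrable on [0,1]^2, and for a.e. t in [0,1] the function v(t,.) is the
  primitive of w(t,.) vanishing at 0 and also vanishes at 1.
  (The full H^1 norm is controlled by the L^2 norm of w via Poincare.)\<close>
definition L2_H10 :: "(real \<Rightarrow> real \<Rightarrow> real) \<Rightarrow> (real \<Rightarrow> real \<Rightarrow> real) \<Rightarrow> bool" where
  "L2_H10 v w \<longleftrightarrow>
     (\<lambda>z. v (fst z) (snd z)) \<in> borel_measurable (restrict_space borel unit_square) \<and>
     (\<lambda>z. w (fst z) (snd z)) \<in> borel_measurable (restrict_space borel unit_square) \<and>
     set_integrable lborel unit_square (\<lambda>z. (w (fst z) (snd z))\<^sup>2) \<and>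
     (AE t in lborel. t \<in> {0..1} \<longrightarrow>
        set_integrable lborel {0..1} (w t) \<and>
        (\<forall>x\<in>{0..1}. v t x = (LINT s:{0..x}|lborel. w t s)) \<and>
        v t 1 = 0)"

definition lagrangian_flow :: "(real \<Rightarrow> real \<Rightarrow> real) \<Rightarrow> (real \<Rightarrow> real \<Rightarrow> real) \<Rightarrow> bool" where
  "lagrangian_flow v \<phi> \<longleftrightarrow>
     (\<forall>t\<in>{0..1}. \<forall>x\<in>{0..1}. \<phi> t x \<in> {0..1}) \<and>
     (\<forall>t\<in>{0..1}. mono_on {0..1} (\<phi> t)) \<and>
     (\<forall>x\<in>{0..1}.
        abs_cont_on {0..1} (\<lambda>t. \<phi> t x) \<and>
        (\<forall>s t. 0 \<le> s \<and> s < t \<and> t \<le> 1 \<longrightarrow>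
           set_integrable lborel {s..t} (\<lambda>r. v r (\<phi> r x)) \<and>
           \<phi> t x - \<phi> s x = (LINT r:{s..t}|lborel. v r (\<phi> r x))))"

definition gen_inv :: "(real \<Rightarrow> real \<Rightarrow> real) \<Rightarrow> real \<Rightarrow> real \<Rightarrow> real" where
  "gen_inv \<phi> t y =
     (if {x\<in>{0..1}. y \<le> \<phi> t x} = {} then 1 else Inf {x\<in>{0..1}. y \<le> \<phi> t x})"

definition pt :: "(real \<times> real \<Rightarrow> real) \<Rightarrow> real \<times> real \<Rightarrow> real" where
  "pt f z = deriv (\<lambda>s. f (s, snd z)) (fst z)"

definition px :: "(real \<times> real \<Rightarrow> real) \<Rightarrow> real \<times> real \<Rightarrow> real" where
  "px f z = deriv (\<lambda>y. f (fst z, y)) (snd z)"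

fun Ck_on :: "nat \<Rightarrow> (real \<times> real) set \<Rightarrow> (real \<times> real \<Rightarrow> real) \<Rightarrow> bool" where
  "Ck_on 0 U f = continuous_on U f"
| "Ck_on (Suc k) U f =
     (continuous_on U f \<and>
      (\<exists>ft fx. (\<forall>z\<in>U. ((\<lambda>s. f (s, snd z)) has_real_derivative ft z) (at (fst z)) \<and>
                       ((\<lambda>y. f (fst z, y)) has_real_derivative fx z) (at (snd z))) \<and>
               Ck_on k U ft \<and> Ck_on k U fx))"

definition C2_square :: "(real \<times> real \<Rightarrow> real) \<Rightarrow> bool" where
  "C2_square f \<longleftrightarrow> (\<exists>U. open U \<and> unit_square \<subseteq> U \<and> Ck_on 2 U f)"

definition test_fun :: "(real \<times> real \<Rightarrow> real) \<Rightarrow> bool" where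
  "test_fun f \<longleftrightarrow> (\<forall>k. Ck_on k UNIV f) \<and>
     (\<exists>K. compact K \<and> K \<subseteq> {0<..<1} \<times> {0<..<1} \<and> (\<forall>z. z \<notin> K \<longrightarrow> f z = 0))"

text \<open>A finite (nonnegative) Borel measure on R^2 concentrated on D.  Finite signed Radon
  measures on D are represented as differences M1 - M2 of two such measures.\<close>
definition finite_meas_on_square :: "(real \<times> real) measure \<Rightarrow> bool" where
  "finite_meas_on_square M \<longleftrightarrow>
     sets M = sets borel \<and> finite_measure M \<and> emeasure M (UNIV - unit_square) = 0"

end

theory Submission
  imports Defs
begin

(* Write psi for gen_inv phi.  The pairing of d_t d_x phi with f is computed by two integrations
   by parts.  In time, t |-> phi(t,x) is a primitive of v(t,phi(t,x)), so
   int int phi d_t d_x f = - int int v(t,phi(t,x)) d_x f(t,x) dx dt.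
   In space, v(t,.) is the primitive of w(t,.) vanishing at 0, and the superlevel sets
   {x. y <= phi(t,x)} are intervals from psi(t,y) to 1; Fubini on the region y <= phi(t,x) gives
   int v(t,phi(t,x)) h'(x) dx = - int w(t,y) h(psi(t,y)) dy whenever h(1) = 0.
   So the pairing equals int int w(t,y) f(t,psi(t,y)), i.e. the integral of f against the
   pushforwards of w^+ dz and w^- dz under (t,y) |-> (t,psi(t,y)), two finite measures on the
   square.  That representation makes sense for every continuous f, in particular for f in C^2. *)

lemma abs_cont_on_imp_continuous_on:
  assumes "abs_cont_on I g"
  shows "continuous_on I g"
  unfolding continuous_on_iff
proof (intro ballI allI impI)
  fix x e :: real assume x: "x \<in> I" and e: "0 < e"
  obtain d where d: "d > 0" and H: "\<And>(n::nat) a b.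
        (\<forall>i<n. a i \<in> I \<and> b i \<in> I \<and> a i \<le> b i) \<and>
        (\<forall>i. Suc i < n \<longrightarrow> b i \<le> a (Suc i)) \<and>
        (\<Sum>i<n. b i - a i) < d
        \<Longrightarrow> (\<Sum>i<n. \<bar>g (b i) - g (a i)\<bar>) < e"
    using assms e unfolding abs_cont_on_def by (elim allE[of _ e]) auto
  have close: "\<bar>g q - g p\<bar> < e" if "p \<in> I" "q \<in> I" "p \<le> q" "q - p < d" for p q
    using H[of 1 "\<lambda>_. p" "\<lambda>_. q"] that by simp
  show "\<exists>d>0. \<forall>x'\<in>I. dist x' x < d \<longrightarrow> dist (g x') (g x) < e"
  proof (intro exI[of _ d] conjI ballI impI d)
    fix x' assume x': "x' \<in> I" and "dist x' x < d"
    then show "dist (g x') (g x) < e"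
      using close[of x' x] close[of x x'] x by (cases "x' \<le> x") (auto simp: dist_real_def abs_minus_commute)
  qed
qed

lemma
  assumes flow: "lagrangian_flow v \<phi>"
  shows lagrangian_flow_range: "\<And>t x. t \<in> {0..1} \<Longrightarrow> x \<in> {0..1} \<Longrightarrow> \<phi> t x \<in> {0..1}"
    and lagrangian_flow_mono: "\<And>t. t \<in> {0..1} \<Longrightarrow> mono_on {0..1} (\<phi> t)"
    and lagrangian_flow_continuous: "\<And>x. x \<in> {0..1} \<Longrightarrow> continuous_on {0..1} (\<lambda>t. \<phi> t x)"
    and lagrangian_flow_integrable: "\<And>x. x \<in> {0..1} \<Longrightarrow> set_integrable lborel {0..1} (\<lambda>r. v r (\<phi> r x))"
    and lagrangian_flow_primitive: "\<And>t x. t \<in> {0..1} \<Longrightarrow> x \<in> {0..1} \<Longrightarrow>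
                    \<phi> t x = \<phi> 0 x + (LINT r:{0..t}|lborel. v r (\<phi> r x))"
proof -
  note F = flow[unfolded lagrangian_flow_def]
  show "\<And>t x. t \<in> {0..1} \<Longrightarrow> x \<in> {0..1} \<Longrightarrow> \<phi> t x \<in> {0..1}"
    and "\<And>t. t \<in> {0..1} \<Longrightarrow> mono_on {0..1} (\<phi> t)"
    using F by blast+
  show "\<And>x. x \<in> {0..1} \<Longrightarrow> continuous_on {0..1} (\<lambda>t. \<phi> t x)"
    using F abs_cont_on_imp_continuous_on by blast
  fix x :: real assume x: "x \<in> {0..1}"
  then have H: "\<forall>s t. 0 \<le> s \<and> s < t \<and> t \<le> 1 \<longrightarrow>
           set_integrable lborel {s..t} (\<lambda>r. v r (\<phi> r x)) \<and>
           \<phi> t x - \<phi> s x = (LINT r:{s..t}|lborel. v r (\<phi> r x))" using F by blast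
  then show "set_integrable lborel {0..1} (\<lambda>r. v r (\<phi> r x))"
    by (metis zero_less_one order_refl)
  fix t :: real assume t: "t \<in> {0..1}"
  show "\<phi> t x = \<phi> 0 x + (LINT r:{0..t}|lborel. v r (\<phi> r x))"
  proof (cases "t = 0")
    case True
    have "(LINT r:{0..0}|lborel. v r (\<phi> r x)) = 0"
      unfolding set_lebesgue_integral_def
      by (rule integral_eq_zero_AE) (use AE_lborel_singleton[of 0] in \<open>auto elim!: eventually_mono\<close>)
    then show ?thesis using True by simp
  next
    case False
    then show ?thesis using H t by (metis atLeastAtMost_iff order_le_less diff_add_cancel add.commute)
  qed
qed

lemma sets_borel_unit_square[measurable]: "unit_square \<in> sets borel"
  by (intro borel_closed closed_Times closed_atLeastAtMost)

lemma compact_unit_square: "compact unit_square"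
  by (intro compact_Times compact_Icc)

lemma integrable_indicator_unit_square: "integrable lborel (\<lambda>z. indicator unit_square z * (c::real))"
  using borel_integrable_compact[OF compact_unit_square, of "\<lambda>_. c"] by simp

lemma continuous_on_compact_abs_bound:
  fixes f :: "'a::metric_space \<Rightarrow> real"
  assumes "continuous_on S f" "compact S"
  obtains C where "C > 0" "\<And>x. x \<in> S \<Longrightarrow> \<bar>f x\<bar> \<le> C"
  using compact_imp_bounded[OF compact_continuous_image[OF assms]] that
  by (auto simp: bounded_pos)

lemma borel_measurable_mono_on_indicator:
  fixes g :: "real \<Rightarrow> real"
  assumes "mono_on S g" "S \<in> sets borel"
  shows "(\<lambda>x. indicator S x * g x) \<in> borel_measurable borel"
  using borel_measurable_mono_on_fnc[OF assms(1)] borel_measurable_restrict_space_iff[of S borel g] assms(2)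
  by simp

lemma mem_grid_interval_iff:
  fixes N t :: real
  assumes "N > 0" "t \<ge> 0"
  shows "t \<in> {real k / N ..< real (Suc k) / N} \<longleftrightarrow> k = nat \<lfloor>N * t\<rfloor>"
proof -
  have "t \<in> {real k / N ..< real (Suc k) / N} \<longleftrightarrow> real k \<le> N * t \<and> N * t < real k + 1"
    using assms by (auto simp: field_simps)
  also have "\<dots> \<longleftrightarrow> \<lfloor>N * t\<rfloor> = int k"
    by (simp add: floor_eq_iff)
  also have "\<dots> \<longleftrightarrow> k = nat \<lfloor>N * t\<rfloor>"
    using assms by auto
  finally show ?thesis .
qed

lemma LIMSEQ_grid_point:
  fixes t :: real
  assumes "t \<ge> 0"
  shows "(\<lambda>n. real (nat \<lfloor>real (Suc n) * t\<rfloor>) / real (Suc n)) \<longlonglongrightarrow> t"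
proof (rule tendsto_sandwich[of "\<lambda>n. t - inverse (real (Suc n))" _ _ "\<lambda>n. t"])
  have "t - inverse (real (Suc n)) \<le> real (nat \<lfloor>real (Suc n) * t\<rfloor>) / real (Suc n)
      \<and> real (nat \<lfloor>real (Suc n) * t\<rfloor>) / real (Suc n) \<le> t" for n
  proof -
    define N where "N = real (Suc n)"
    have N: "N > 0" by (simp add: N_def)
    define m where "m = real (nat \<lfloor>N * t\<rfloor>)"
    have "N * t - 1 \<le> m" "m \<le> N * t"
      using floor_correct[of "N * t"] N assms by (simp_all add: m_def of_nat_nat)
    moreover have "t - inverse N = (N * t - 1) / N" "t = (N * t) / N"
      using N by (simp_all add: field_simps)
    ultimately have "t - inverse N \<le> m / N \<and> m / N \<le> t"
      using N by (metis divide_right_mono less_imp_le)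
    then show ?thesis by (simp add: N_def m_def)
  qed
  then show "\<forall>\<^sub>F n in sequentially. t - inverse (real (Suc n)) \<le> real (nat \<lfloor>real (Suc n) * t\<rfloor>) / real (Suc n)"
    and "\<forall>\<^sub>F n in sequentially. real (nat \<lfloor>real (Suc n) * t\<rfloor>) / real (Suc n) \<le> t"
    by (auto intro: always_eventually)
  show "(\<lambda>n. t - inverse (real (Suc n))) \<longlonglongrightarrow> t"
    using tendsto_diff[OF tendsto_const LIMSEQ_inverse_real_of_nat, of t] by simp
qed simp

lemma borel_measurable_caratheodory_unit_square:
  fixes F :: "real \<Rightarrow> real \<Rightarrow> real"
  assumes meas: "\<And>t. t \<in> {0..1} \<Longrightarrow> (\<lambda>x. indicator {0..1} x * F t x) \<in> borel_measurable borel"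
    and cont: "\<And>x. x \<in> {0..1} \<Longrightarrow> continuous_on {0..1} (\<lambda>t. F t x)"
  shows "(\<lambda>z. indicator unit_square z * F (fst z) (snd z)) \<in> borel_measurable borel"
proof -
  define N where "N n = real (Suc n)" for n :: nat
  define G where "G c x = indicator {0..1} x * F c x" for c x
  \<comment> \<open>step functions in t, frozen at the left end point of each cell of mesh 1/(n+1)\<close>
  define u where "u n z = (\<Sum>k\<le>Suc n. indicator {real k / N n ..< real (Suc k) / N n} (fst z) *
       (indicator {0..1} (fst z) * G (real k / N n) (snd z)))" for n z
  have N: "N n > 0" for n by (simp add: N_def)
  have u_measurable: "u n \<in> borel_measurable borel" for n
    unfolding u_def
  proof (intro borel_measurable_sum)
    fix k assume "k \<in> {..Suc n}"
    then have "real k / N n \<in> {0..1}" by (auto simp: N_def)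
    note [measurable] = meas[OF this, folded G_def]
    show "(\<lambda>z. indicator {real k / N n ..< real (Suc k) / N n} (fst z) *
       (indicator {0..1} (fst z) * G (real k / N n) (snd z))) \<in> borel_measurable borel"
      unfolding borel_prod[symmetric] by measurable
  qed
  show ?thesis
  proof (rule borel_measurable_LIMSEQ_real[OF _ u_measurable])
    fix z :: "real \<times> real"
    show "(\<lambda>n. u n z) \<longlonglongrightarrow> indicator unit_square z * F (fst z) (snd z)"
    proof (cases "z \<in> unit_square")
      case False
      then have "u n z = 0" for n by (auto simp: u_def G_def mem_Times_iff)
      then show ?thesis using False by simp
    next
      case True
      obtain t x where z: "z = (t, x)" and t: "t \<in> {0..1}" and x: "x \<in> {0..1}"
        using True by (cases z) auto
      define m where "m n = nat \<lfloor>N n * t\<rfloor>" for n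
      have m_le: "m n \<le> Suc n" for n
        using floor_mono[of "N n * t" "N n"] t N[of n] by (simp add: m_def N_def nat_le_iff mult_le_cancel_left1)
      have "u n z = (\<Sum>k\<le>Suc n. if k = m n then F (real k / N n) x else 0)" for n
        unfolding u_def z using t x mem_grid_interval_iff[OF N, of t] by (intro sum.cong) (auto simp: G_def m_def)
      then have u_eq: "u n z = F (real (m n) / N n) x" for n
        using m_le[of n] by (simp add: sum.delta)
      have "(\<lambda>n. real (m n) / N n) \<longlonglongrightarrow> t"
        using LIMSEQ_grid_point[of t] t by (simp add: m_def N_def)
      moreover have "real (m n) / N n \<in> {0..1}" for n
        using m_le[of n] by (auto simp: N_def)
      ultimately have "(\<lambda>n. F (real (m n) / N n) x) \<longlonglongrightarrow> F t x"
        by (intro continuous_on_tendsto_compose[OF cont[OF x] _ t]) (auto intro: always_eventually)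
      then show ?thesis using True unfolding u_eq by (simp add: z)
    qed
  qed
qed

lemma gen_inv_in_unit_interval: "gen_inv \<phi> t y \<in> {0..1}"
proof (cases "{x\<in>{0..1}. y \<le> \<phi> t x} = {}")
  case False
  then obtain s where s: "s \<in> {x\<in>{0..1}. y \<le> \<phi> t x}" by blast
  have "Inf {x\<in>{0..1}. y \<le> \<phi> t x} \<ge> 0" using False by (intro cInf_greatest) auto
  moreover have "Inf {x\<in>{0..1}. y \<le> \<phi> t x} \<le> s" by (rule cInf_lower[OF s]) (auto intro: bdd_belowI[of _ 0])
  ultimately show ?thesis using False s by (simp add: gen_inv_def)
qed (simp add: gen_inv_def)

lemma superlevel_set_eq_gen_inv:
  fixes y :: real
  assumes mono: "mono_on {0..1} (\<phi> t)"
  defines "S \<equiv> {x\<in>{0..1}. y \<le> \<phi> t x}"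
  shows "S = {} \<or> S = {gen_inv \<phi> t y..1} \<or> S = {gen_inv \<phi> t y<..1}"
proof (cases "S = {}")
  case False
  define q where "q = gen_inv \<phi> t y"
  have q: "q = Inf S" using False unfolding q_def gen_inv_def S_def[symmetric] by simp
  have bdd: "bdd_below S" unfolding S_def by (rule bdd_belowI[of _ 0]) auto
  have lower: "q \<le> x \<and> x \<le> 1" if "x \<in> S" for x
    using cInf_lower[OF that bdd] that by (simp add: q S_def)
  have upper: "x \<in> S" if qx: "q < x" and x1: "x \<le> 1" for x
  proof -
    obtain s where s: "s \<in> S" "s < x" using cInf_less_iff[OF False bdd] qx q by auto
    have "x \<in> {0..1}" using qx x1 gen_inv_in_unit_interval[of \<phi> t y] by (simp add: q_def)
    with s mono_onD[OF mono, of s x] show ?thesis by (auto simp: S_def)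
  qed
  have "S = {q..1} \<or> S = {q<..1}"
  proof (cases "q \<in> S")
    case True
    have "S = {q..1}"
      using lower upper True by (intro equalityI subsetI) (auto simp: order_le_less)
    then show ?thesis ..
  next
    case False
    have "S = {q<..1}"
      using lower upper False by (intro equalityI subsetI) (auto simp: order_le_less)
    then show ?thesis ..
  qed
  then show ?thesis by (simp add: q_def)
qed simp

lemma gen_inv_le_iff:
  assumes mono: "mono_on {0..1} (\<phi> t)" and c: "0 \<le> c" "c < 1"
  shows "gen_inv \<phi> t y \<le> c \<longleftrightarrow> (\<forall>n. y \<le> \<phi> t (min 1 (c + inverse (real (Suc n)))))"
proof -
  define S where "S = {x\<in>{0..1}. y \<le> \<phi> t x}"
  define q where "q = gen_inv \<phi> t y"
  define x where "x n = min 1 (c + inverse (real (Suc n)))" for n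
  have x: "c < x n" "x n \<in> {0..1}" for n
    using c by (auto simp: x_def)
  have S: "S = {} \<or> S = {q..1} \<or> S = {q<..1}"
    using superlevel_set_eq_gen_inv[of \<phi> t y, OF mono] by (simp add: S_def q_def)
  have "q \<le> c \<longleftrightarrow> (\<forall>n. x n \<in> S)"
  proof
    assume "q \<le> c"
    then have "S \<noteq> {}" using c unfolding q_def gen_inv_def S_def[symmetric] by auto
    then have "S = {q..1} \<or> S = {q<..1}" using S by blast
    moreover have "x n \<in> {q<..1}" for n using x[of n] \<open>q \<le> c\<close> by auto
    moreover have "{q<..1} \<subseteq> {q..1}" by auto
    ultimately show "\<forall>n. x n \<in> S" by blast
  next
    assume all: "\<forall>n. x n \<in> S"
    show "q \<le> c"
    proof (rule ccontr)
      assume "\<not> q \<le> c"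
      then obtain n where n: "inverse (real (Suc n)) < q - c"
        using reals_Archimedean[of "q - c"] by auto
      have "x n \<in> S" using all by blast
      then have "q \<le> x n" using S by (elim disjE) auto
      then show False using n by (simp add: x_def)
    qed
  qed
  then show ?thesis using x by (simp add: q_def S_def x_def)
qed

lemma (in pair_sigma_finite) integrable_product_bound:
  fixes K :: "'a \<times> 'b \<Rightarrow> real"
  assumes a: "integrable M1 a" and b: "integrable M2 b"
    and K[measurable]: "K \<in> borel_measurable (M1 \<Otimes>\<^sub>M M2)"
    and bound: "AE x in M1. \<forall>y\<in>space M2. \<bar>K (x, y)\<bar> \<le> \<bar>a x\<bar> * \<bar>b y\<bar>"
  shows "integrable (M1 \<Otimes>\<^sub>M M2) K"
proof (rule Fubini_integrable[OF K])
  have slice: "integrable M2 (\<lambda>y. K (x, y)) \<and> (\<integral>y. norm (K (x, y)) \<partial>M2) \<le> \<bar>a x\<bar> * (\<integral>y. \<bar>b y\<bar> \<partial>M2)"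
    if x: "x \<in> space M1" and bx: "\<forall>y\<in>space M2. \<bar>K (x, y)\<bar> \<le> \<bar>a x\<bar> * \<bar>b y\<bar>" for x
  proof
    have bi: "integrable M2 (\<lambda>y. \<bar>a x\<bar> * \<bar>b y\<bar>)" using b by simp
    have Kx: "(\<lambda>y. K (x, y)) \<in> borel_measurable M2" using x by measurable
    show "integrable M2 (\<lambda>y. K (x, y))"
      by (rule Bochner_Integration.integrable_bound[OF bi Kx]) (use bx in \<open>auto intro!: AE_I2\<close>)
    then have "(\<integral>y. norm (K (x, y)) \<partial>M2) \<le> (\<integral>y. \<bar>a x\<bar> * \<bar>b y\<bar> \<partial>M2)"
      using bx by (intro integral_mono_AE integrable_norm bi) (auto intro!: AE_I2)
    then show "(\<integral>y. norm (K (x, y)) \<partial>M2) \<le> \<bar>a x\<bar> * (\<integral>y. \<bar>b y\<bar> \<partial>M2)"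
      by simp
  qed
  show "AE x in M1. integrable M2 (\<lambda>y. K (x, y))"
    using bound AE_space by eventually_elim (use slice in blast)
  show "integrable M1 (\<lambda>x. \<integral>y. norm (K (x, y)) \<partial>M2)"
  proof (rule Bochner_Integration.integrable_bound)
    show "integrable M1 (\<lambda>x. \<bar>a x\<bar> * (\<integral>y. \<bar>b y\<bar> \<partial>M2))" using a by simp
    show "AE x in M1. norm (\<integral>y. norm (K (x, y)) \<partial>M2) \<le> norm (\<bar>a x\<bar> * (\<integral>y. \<bar>b y\<bar> \<partial>M2))"
      using bound AE_space
    proof eventually_elim
      case (elim x)
      have "0 \<le> (\<integral>y. norm (K (x, y)) \<partial>M2)" by (rule integral_nonneg_AE) auto
      then show ?case using slice[OF elim(2,1)] by simp
    qed
  qed measurable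
qed

lemma set_integral_deriv_up_to:
  fixes h h' :: "real \<Rightarrow> real"
  assumes deriv: "\<And>x. x \<in> {a..b} \<Longrightarrow> (h has_real_derivative h' x) (at x)"
    and cont: "continuous_on {a..b} h'" and q: "q \<in> {a..b}"
  shows "(LINT x:{q..b}|lborel. h' x) = h b - h q" and "(LINT x:{q<..b}|lborel. h' x) = h b - h q"
proof -
  have "interval_lebesgue_integral lborel (ereal q) (ereal b) h' = h b - h q"
  proof (rule interval_integral_FTC_finite)
    show "continuous_on {min q b..max q b} h'"
      using q by (intro continuous_on_subset[OF cont]) auto
    fix x assume "min q b \<le> x" "x \<le> max q b"
    then have "x \<in> {a..b}" using q by auto
    then show "(h has_vector_derivative h' x) (at x within {min q b..max q b})"
      using deriv unfolding has_real_derivative_iff_has_vector_derivative by (blast intro: has_vector_derivative_at_within)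
  qed
  moreover have "q \<le> b" using q by simp
  ultimately show "(LINT x:{q..b}|lborel. h' x) = h b - h q" "(LINT x:{q<..b}|lborel. h' x) = h b - h q"
    using interval_integral_Icc[of q b h'] interval_integral_Ioc[of q b h'] by simp_all
qed

lemma set_integral_superlevel_set:
  fixes h h' :: "real \<Rightarrow> real"
  assumes mono: "mono_on {0..1} (\<phi> t)"
    and deriv: "\<And>x. x \<in> {0..1} \<Longrightarrow> (h has_real_derivative h' x) (at x)"
    and cont: "continuous_on {0..1} h'"
  shows "(LINT x:{x\<in>{0..1}. y \<le> \<phi> t x}|lborel. h' x) = h 1 - h (gen_inv \<phi> t y)"
proof (cases "{x\<in>{0..1}. y \<le> \<phi> t x} = {}")
  case True
  then show ?thesis by (simp add: gen_inv_def set_lebesgue_integral_def)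
next
  case False
  then show ?thesis
    using superlevel_set_eq_gen_inv[of \<phi> t y, OF mono]
      set_integral_deriv_up_to[OF deriv cont gen_inv_in_unit_interval[of \<phi> t y]]
    by auto
qed

lemma integration_by_parts_primitive:
  fixes a g g' \<Phi> :: "real \<Rightarrow> real"
  assumes a: "set_integrable lborel {0..1} a"
    and \<Phi>: "\<And>t. t \<in> {0..1} \<Longrightarrow> \<Phi> t = \<Phi> 0 + (LINT r:{0..t}|lborel. a r)"
    and deriv: "\<And>t. t \<in> {0..1} \<Longrightarrow> (g has_real_derivative g' t) (at t)"
    and cont: "continuous_on {0..1} g'" and g0: "g 0 = 0" and g1: "g 1 = 0"
  shows "(LINT t:{0..1}|lborel. \<Phi> t * g' t) = - (LINT t:{0..1}|lborel. a t * g t)"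
proof -
  define A where "A t = (LINT r:{0..t}|lborel. a r)" for t
  define aa where "aa r = indicator {0..1} r * a r" for r
  define gg where "gg t = indicator {0..1} t * g' t" for t
  have aa: "integrable lborel aa" using a by (simp add: set_integrable_def aa_def[abs_def])
  have gg: "integrable lborel gg"
    using borel_integrable_compact[OF compact_Icc cont] by (simp add: gg_def[abs_def])
  note [measurable] = borel_measurable_integrable[OF aa] borel_measurable_integrable[OF gg]
  \<comment> \<open>Fubini on the triangle r \<le> t\<close>
  define K where "K r t = aa r * indicator {p::real \<times> real. fst p \<le> snd p} (r, t) * gg t" for r t
  have "case_prod K \<in> borel_measurable (lborel \<Otimes>\<^sub>M lborel)"
    unfolding K_def by measurable
  then have "integrable (lborel \<Otimes>\<^sub>M lborel) (case_prod K)"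
    by (rule lborel_pair.integrable_product_bound[OF aa gg])
       (auto simp: K_def indicator_def abs_mult intro!: AE_I2)
  then have Fubini: "(LINT t|lborel. LINT r|lborel. K r t) = (LINT r|lborel. LINT t|lborel. K r t)"
    by (rule lborel_pair.Fubini_integral)
  have inner_r: "(LINT r|lborel. K r t) = A t * gg t" for t
    by (cases "t \<in> {0..1}")
       (auto simp: K_def aa_def gg_def A_def set_lebesgue_integral_def indicator_def intro!: Bochner_Integration.integral_cong)
  have inner_t: "(LINT t|lborel. K r t) = aa r * (g 1 - g r)" for r
  proof (cases "r \<in> {0..1}")
    case True
    have "(LINT t|lborel. K r t) = aa r * (LINT t:{r..1}|lborel. g' t)"
      unfolding set_lebesgue_integral_def
      by (simp flip: integral_mult_right_zero add: K_def gg_def indicator_def mult_ac)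
         (use True in \<open>auto intro!: Bochner_Integration.integral_cong\<close>)
    then show ?thesis using set_integral_deriv_up_to(1)[OF deriv cont True] by simp
  qed (simp add: K_def aa_def)
  have "integrable lborel (\<lambda>t. A t * gg t)"
    using lborel_pair.integrable_snd[of "\<lambda>r t. K r t"] \<open>integrable _ (case_prod K)\<close> by (simp add: inner_r)
  moreover have "(LINT t|lborel. gg t) = 0"
    using set_integral_deriv_up_to(1)[OF deriv cont, of 0] g0 g1 by (simp add: gg_def set_lebesgue_integral_def)
  moreover have "indicator {0..1} t * (\<Phi> t * g' t) = \<Phi> 0 * gg t + A t * gg t" for t
    using \<Phi>[of t] by (cases "t \<in> {0..1}") (auto simp: gg_def A_def algebra_simps)
  ultimately have "(LINT t:{0..1}|lborel. \<Phi> t * g' t) = (LINT t|lborel. LINT r|lborel. K r t)"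
    using gg by (simp add: set_lebesgue_integral_def inner_r)
  also have "\<dots> = (LINT r|lborel. aa r * (g 1 - g r))"
    using Fubini by (simp add: inner_t)
  also have "\<dots> = - (LINT t:{0..1}|lborel. a t * g t)"
    by (simp flip: integral_minus add: set_lebesgue_integral_def aa_def g1 algebra_simps)
  finally show ?thesis .
qed

lemma set_integral_primitive_comp_mult_deriv:
  fixes V W h h' :: "real \<Rightarrow> real"
  assumes mono: "mono_on {0..1} (\<phi> t)" and range: "\<And>x. x \<in> {0..1} \<Longrightarrow> \<phi> t x \<in> {0..1}"
    and W: "set_integrable lborel {0..1} W"
    and V: "\<And>x. x \<in> {0..1} \<Longrightarrow> V x = (LINT s:{0..x}|lborel. W s)"
    and deriv: "\<And>x. x \<in> {0..1} \<Longrightarrow> (h has_real_derivative h' x) (at x)"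
    and cont: "continuous_on {0..1} h'" and h1: "h 1 = 0"
  shows "(LINT x:{0..1}|lborel. V (\<phi> t x) * h' x) = - (LINT y:{0..1}|lborel. W y * h (gen_inv \<phi> t y))"
proof -
  define ww where "ww y = indicator {0..1} y * W y" for y
  define hh where "hh x = indicator {0..1} x * h' x" for x
  define P where "P x = indicator {0..1} x * \<phi> t x" for x
  have ww: "integrable lborel ww" using W by (simp add: set_integrable_def ww_def[abs_def])
  have hh: "integrable lborel hh"
    using borel_integrable_compact[OF compact_Icc cont] by (simp add: hh_def[abs_def])
  have [measurable]: "P \<in> borel_measurable borel"
    unfolding P_def[abs_def] by (rule borel_measurable_mono_on_indicator[OF mono]) simp
  note [measurable] = borel_measurable_integrable[OF ww] borel_measurable_integrable[OF hh]
  \<comment> \<open>Fubini on the region y \<le> \<phi> t x, whose x-sections are superlevel sets of \<phi> t\<close>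
  define K where "K x y = hh x * indicator {p::real \<times> real. snd p \<le> P (fst p)} (x, y) * ww y" for x y
  have "case_prod K \<in> borel_measurable (lborel \<Otimes>\<^sub>M lborel)"
    unfolding K_def by measurable
  then have "integrable (lborel \<Otimes>\<^sub>M lborel) (case_prod K)"
    by (rule lborel_pair.integrable_product_bound[OF hh ww])
       (auto simp: K_def indicator_def abs_mult intro!: AE_I2)
  then have Fubini: "(LINT y|lborel. LINT x|lborel. K x y) = (LINT x|lborel. LINT y|lborel. K x y)"
    by (rule lborel_pair.Fubini_integral)
  have inner_y: "(LINT y|lborel. K x y) = indicator {0..1} x * (V (\<phi> t x) * h' x)" for x
  proof (cases "x \<in> {0..1}")
    case True
    have "(LINT y|lborel. K x y) = (LINT y|lborel. (indicator {0..\<phi> t x} y * W y) * hh x)"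
      by (rule Bochner_Integration.integral_cong[OF refl])
         (use True range[OF True] in \<open>auto simp: K_def ww_def P_def indicator_def\<close>)
    then show ?thesis
      using True V[OF range[OF True]] by (simp add: hh_def set_lebesgue_integral_def)
  qed (simp add: K_def hh_def)
  have inner_x: "(LINT x|lborel. K x y) = - indicator {0..1} y * (W y * h (gen_inv \<phi> t y))" for y
  proof (cases "y \<in> {0..1}")
    case True
    have "(LINT x|lborel. K x y) = ww y * (LINT x:{x\<in>{0..1}. y \<le> \<phi> t x}|lborel. h' x)"
      unfolding set_lebesgue_integral_def
      by (simp flip: integral_mult_right_zero)
         (auto simp: K_def hh_def P_def indicator_def intro!: Bochner_Integration.integral_cong)
    then show ?thesis
      using True h1 set_integral_superlevel_set[of \<phi> t h h' y, OF mono deriv cont] by (simp add: ww_def)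
  qed (simp add: K_def ww_def)
  have "(LINT x:{0..1}|lborel. V (\<phi> t x) * h' x) = (LINT x|lborel. LINT y|lborel. K x y)"
    by (simp add: set_lebesgue_integral_def inner_y)
  also have "\<dots> = - (LINT y:{0..1}|lborel. W y * h (gen_inv \<phi> t y))"
    by (simp flip: Fubini integral_minus add: set_lebesgue_integral_def inner_x)
  finally show ?thesis .
qed

lemma borel_measurable_gen_inv:
  fixes \<phi> :: "real \<Rightarrow> real \<Rightarrow> real"
  assumes mono: "\<And>t. t \<in> {0..1} \<Longrightarrow> mono_on {0..1} (\<phi> t)"
    and cont: "\<And>x. x \<in> {0..1} \<Longrightarrow> continuous_on {0..1} (\<lambda>t. \<phi> t x)"
  shows "(\<lambda>z. gen_inv \<phi> (fst z) (snd z)) \<in> borel_measurable (restrict_space borel unit_square)"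
proof (subst borel_measurable_iff_le, intro allI)
  fix c :: real
  define X where "X = {z \<in> unit_square. gen_inv \<phi> (fst z) (snd z) \<le> c}"
  have "X \<in> sets borel"
  proof -
    consider "c < 0" | "1 \<le> c" | "0 \<le> c" "c < 1" by linarith
    then show ?thesis
    proof cases
      case 1
      then have "X = {}" using gen_inv_in_unit_interval[of \<phi>] unfolding X_def
        by (auto simp: not_le) (meson atLeastAtMost_iff less_le_trans not_less)
      then show ?thesis by simp
    next
      case 2
      then have "X = unit_square" using gen_inv_in_unit_interval[of \<phi>] unfolding X_def
        by (auto intro: order_trans)
      then show ?thesis by simp
    next
      case 3
      define x where "x n = min 1 (c + inverse (real (Suc n)))" for n
      define H where "H n t = \<phi> (max 0 (min 1 t)) (x n)" for n t
      have "continuous_on UNIV (H n)" for n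
      proof -
        have "x n \<in> {0..1}" using 3 by (auto simp: x_def)
        then show ?thesis
          unfolding H_def by (intro continuous_on_compose2[OF cont] continuous_intros) auto
      qed
      then have [measurable]: "H n \<in> borel_measurable borel" for n
        by (rule borel_measurable_continuous_onI)
      have "{z \<in> space (borel \<Otimes>\<^sub>M borel). snd z \<le> H n (fst z)} \<in> sets (borel \<Otimes>\<^sub>M (borel :: real measure))" for n
        by measurable
      then have "{z::real \<times> real. snd z \<le> H n (fst z)} \<in> sets borel" for n
        by (simp only: borel_prod space_borel UNIV_I simp_thms)
      moreover have "gen_inv \<phi> t y \<le> c \<longleftrightarrow> (\<forall>n. y \<le> H n t)" if "t \<in> {0..1}" for t y
        using gen_inv_le_iff[of \<phi> t, OF mono[OF that] 3] that by (simp add: H_def x_def)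
      then have "X = unit_square \<inter> (\<Inter>n. {z. snd z \<le> H n (fst z)})"
        by (auto simp: X_def mem_Times_iff)
      ultimately show ?thesis
        by auto
    qed
  qed
  then show "{z \<in> space (restrict_space borel unit_square). gen_inv \<phi> (fst z) (snd z) \<le> c}
      \<in> sets (restrict_space borel unit_square)"
    by (simp add: sets_restrict_space_iff space_restrict_space X_def)
qed

text \<open>The value (0, 0) off the square is junk; it only makes the map land in the square
  everywhere, so that pushforwards under it are concentrated on the square.\<close>
definition gen_inv_map :: "(real \<Rightarrow> real \<Rightarrow> real) \<Rightarrow> real \<times> real \<Rightarrow> real \<times> real" where
  "gen_inv_map \<phi> z = (if z \<in> unit_square then (fst z, gen_inv \<phi> (fst z) (snd z)) else (0, 0))"

lemma gen_inv_map_in_unit_square: "gen_inv_map \<phi> z \<in> unit_square"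
  using gen_inv_in_unit_interval[of \<phi> "fst z" "snd z"] by (simp add: gen_inv_map_def mem_Times_iff)

lemma borel_measurable_gen_inv_map:
  assumes flow: "lagrangian_flow v \<phi>"
  shows "gen_inv_map \<phi> \<in> borel \<rightarrow>\<^sub>M (borel :: (real \<times> real) measure)"
proof -
  have "fst \<in> (borel :: (real \<times> real) measure) \<rightarrow>\<^sub>M borel"
    by (intro borel_measurable_continuous_onI continuous_intros)
  then have "(\<lambda>z. (fst z, gen_inv \<phi> (fst z) (snd z))) \<in> restrict_space borel unit_square \<rightarrow>\<^sub>M borel \<Otimes>\<^sub>M borel"
    using borel_measurable_gen_inv[OF lagrangian_flow_mono[OF flow] lagrangian_flow_continuous[OF flow]]
    by (intro measurable_Pair[OF measurable_restrict_space1])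
  then show ?thesis
    unfolding gen_inv_map_def[abs_def] borel_prod[symmetric]
    by (subst measurable_If_restrict_space_iff) auto
qed

lemma abs_set_integral_subset_le:
  fixes W :: "'a \<Rightarrow> real"
  assumes W: "set_integrable M A W" and B: "B \<in> sets M" "B \<subseteq> A"
  shows "\<bar>LINT s:B|M. W s\<bar> \<le> (LINT s:A|M. \<bar>W s\<bar>)"
proof -
  have "\<bar>LINT s:B|M. W s\<bar> \<le> (LINT s:B|M. \<bar>W s\<bar>)"
    unfolding set_lebesgue_integral_def using integral_abs_bound[of M "\<lambda>s. indicator B s * W s"]
    by (simp add: abs_mult)
  also have "\<dots> \<le> (LINT s:A|M. \<bar>W s\<bar>)"
    unfolding set_lebesgue_integral_def
  proof (rule integral_mono)
    show "integrable M (\<lambda>s. indicator B s *\<^sub>R \<bar>W s\<bar>)" "integrable M (\<lambda>s. indicator A s *\<^sub>R \<bar>W s\<bar>)"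
      using set_integrable_abs[OF set_integrable_subset[OF W B]] set_integrable_abs[OF W]
      by (simp_all add: set_integrable_def)
    show "indicator B s *\<^sub>R \<bar>W s\<bar> \<le> indicator A s *\<^sub>R \<bar>W s\<bar>" for s
      using B(2) by (auto simp: indicator_def)
  qed
  finally show ?thesis .
qed

lemma
  assumes v: "L2_H10 v w"
  shows L2_H10_borel_measurable: "(\<lambda>z. indicator unit_square z * v (fst z) (snd z)) \<in> borel_measurable borel"
    and L2_H10_integrable: "integrable lborel (\<lambda>z. indicator unit_square z * w (fst z) (snd z))"
    and L2_H10_AE_primitive: "AE t in lborel. t \<in> {0..1} \<longrightarrow>
        set_integrable lborel {0..1} (w t) \<and> (\<forall>x\<in>{0..1}. v t x = (LINT s:{0..x}|lborel. w t s))"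
proof -
  note V = v[unfolded L2_H10_def]
  show "(\<lambda>z. indicator unit_square z * v (fst z) (snd z)) \<in> borel_measurable borel"
    using V borel_measurable_restrict_space_iff[of unit_square borel "\<lambda>z. v (fst z) (snd z)"] by simp
  show "AE t in lborel. t \<in> {0..1} \<longrightarrow>
        set_integrable lborel {0..1} (w t) \<and> (\<forall>x\<in>{0..1}. v t x = (LINT s:{0..x}|lborel. w t s))"
    using V by (auto elim!: eventually_mono)
  have "(\<lambda>z. indicator unit_square z * w (fst z) (snd z)) \<in> borel_measurable lborel"
    using V borel_measurable_restrict_space_iff[of unit_square borel "\<lambda>z. w (fst z) (snd z)"] by simp
  moreover have "integrable lborel (\<lambda>z. indicator unit_square z * (1 + (w (fst z) (snd z))\<^sup>2))"
    using integrable_indicator_unit_square[of 1] V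
    by (simp add: set_integrable_def distrib_left)
  moreover have "norm (indicator unit_square z * w (fst z) (snd z))
      \<le> norm (indicator unit_square z * (1 + (w (fst z) (snd z))\<^sup>2))" for z
  proof -
    have "\<bar>a\<bar> \<le> 1 + a\<^sup>2" for a :: real
    proof (cases "\<bar>a\<bar> \<le> 1")
      case False
      then have "\<bar>a\<bar> * 1 \<le> \<bar>a\<bar> * \<bar>a\<bar>" by (intro mult_left_mono) auto
      then show ?thesis by (simp add: power2_eq_square abs_mult_self_eq)
    qed (simp add: add_increasing2)
    then show ?thesis by (simp add: indicator_def)
  qed
  ultimately show "integrable lborel (\<lambda>z. indicator unit_square z * w (fst z) (snd z))"
    by (blast intro: Bochner_Integration.integrable_bound AE_I2)
qed

lemma borel_measurable_continuous_on_comp_unit_square: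
  fixes f :: "real \<times> real \<Rightarrow> real" and T :: "'a \<Rightarrow> real \<times> real"
  assumes f: "continuous_on unit_square f"
    and T: "T \<in> M \<rightarrow>\<^sub>M borel" and T_into: "\<And>z. T z \<in> unit_square"
  shows "(\<lambda>z. f (T z)) \<in> borel_measurable M"
proof -
  have "(\<lambda>z. indicator unit_square z * f z) \<in> borel_measurable borel"
    using borel_measurable_continuous_on_indicator[OF sets_borel_unit_square f] by simp
  from measurable_compose[OF T this]
  have "(\<lambda>z. indicator unit_square (T z) * f (T z)) \<in> borel_measurable M"
    by simp
  then show ?thesis
    using T_into by simp
qed

lemma integrable_mult_continuous_on_comp_unit_square:
  fixes g f :: "real \<times> real \<Rightarrow> real" and T :: "real \<times> real \<Rightarrow> real \<times> real"
  assumes g: "integrable lborel g" and f: "continuous_on unit_square f"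
    and T: "T \<in> borel \<rightarrow>\<^sub>M borel" and T_into: "\<And>z. T z \<in> unit_square"
  shows "integrable lborel (\<lambda>z. g z * f (T z))"
proof -
  obtain C where "C > 0" and C: "\<And>z. z \<in> unit_square \<Longrightarrow> \<bar>f z\<bar> \<le> C"
    using continuous_on_compact_abs_bound[OF f compact_unit_square] by metis
  have "integrable lborel (\<lambda>z. C * g z)"
    using g by simp
  then show ?thesis
  proof (rule Bochner_Integration.integrable_bound)
    show "(\<lambda>z. g z * f (T z)) \<in> borel_measurable lborel"
      using borel_measurable_integrable[OF g] borel_measurable_continuous_on_comp_unit_square[OF f T T_into]
      by simp
    have "\<bar>g z\<bar> * \<bar>f (T z)\<bar> \<le> \<bar>g z\<bar> * C" for z
      by (rule mult_left_mono[OF C[OF T_into]]) simp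
    then show "AE z in lborel. norm (g z * f (T z)) \<le> norm (C * g z)"
      using \<open>C > 0\<close> by (intro AE_I2) (simp add: abs_mult mult.commute)
  qed
qed

lemma
  fixes g :: "real \<times> real \<Rightarrow> real" and T :: "real \<times> real \<Rightarrow> real \<times> real"
  assumes g: "integrable lborel g" "\<And>z. 0 \<le> g z"
    and T[measurable]: "T \<in> borel \<rightarrow>\<^sub>M borel" and T_into: "\<And>z. T z \<in> unit_square"
  defines "M \<equiv> distr (density lborel (\<lambda>z. ennreal (g z))) borel T"
  shows finite_meas_on_square_distr_density: "finite_meas_on_square M"
    and set_integral_distr_density_unit_square: "\<And>f. continuous_on unit_square f \<Longrightarrow>
          (LINT z:unit_square|M. f z) = (LINT z|lborel. g z * f (T z))"
proof -
  note [measurable] = borel_measurable_integrable[OF g(1)]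
  have "emeasure M (space M) = emeasure (density lborel (\<lambda>z. ennreal (g z))) (T -` UNIV \<inter> UNIV)"
    unfolding M_def by (subst emeasure_distr) auto
  also have "\<dots> = (\<integral>\<^sup>+ z. ennreal (g z) \<partial>lborel)"
    by (subst emeasure_density) auto
  also have "\<dots> \<noteq> \<infinity>"
    using integrableD(2)[OF g(1)] .
  finally have "finite_measure M"
    by (rule finite_measureI)
  moreover have "T -` (UNIV - unit_square) = {}"
    using T_into by blast
  then have "emeasure M (UNIV - unit_square) = 0"
    unfolding M_def by (subst emeasure_distr) auto
  ultimately show "finite_meas_on_square M"
    by (simp add: finite_meas_on_square_def M_def)
  fix f :: "real \<times> real \<Rightarrow> real" assume f: "continuous_on unit_square f"
  note [measurable] = borel_measurable_continuous_on_comp_unit_square[OF f T T_into]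
  have [measurable]: "(\<lambda>z. indicator unit_square z * f z) \<in> borel_measurable borel"
    using borel_measurable_continuous_on_indicator[OF sets_borel_unit_square f] by simp
  have "(LINT z:unit_square|M. f z)
      = (LINT z|density lborel (\<lambda>z. ennreal (g z)). indicator unit_square (T z) * f (T z))"
    unfolding M_def set_lebesgue_integral_def by (subst integral_distr) auto
  also have "\<dots> = (LINT z|density lborel (\<lambda>z. ennreal (g z)). f (T z))"
    using T_into by simp
  also have "\<dots> = (LINT z|lborel. g z * f (T z))"
    by (subst integral_density) (auto simp: g(2))
  finally show "(LINT z:unit_square|M. f z) = (LINT z|lborel. g z * f (T z))" .
qed

lemma ex_finite_meas_on_square_pushforward:
  fixes W :: "real \<times> real \<Rightarrow> real" and T :: "real \<times> real \<Rightarrow> real \<times> real"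
  assumes W: "integrable lborel (\<lambda>z. indicator unit_square z * W z)"
    and T: "T \<in> borel \<rightarrow>\<^sub>M borel" and T_into: "\<And>z. T z \<in> unit_square"
  shows "\<exists>M1 M2. finite_meas_on_square M1 \<and> finite_meas_on_square M2 \<and>
     (\<forall>f. continuous_on unit_square f \<longrightarrow>
        (LINT z:unit_square|M1. f z) - (LINT z:unit_square|M2. f z)
          = (LINT z|lborel. indicator unit_square z * W z * f (T z)))"
proof -
  \<comment> \<open>the pushforwards of the positive and negative parts of W dz under T\<close>
  define g1 where "g1 z = indicator unit_square z * max 0 (W z)" for z
  define g2 where "g2 z = indicator unit_square z * max 0 (- W z)" for z
  have W_split: "indicator unit_square z * W z = g1 z - g2 z" for z
    by (simp add: g1_def g2_def max_def)
  note [measurable] = borel_measurable_integrable[OF W]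
  have "g1 = (\<lambda>z. max (indicator unit_square z * W z) 0)"
    and "g2 = (\<lambda>z. max (- (indicator unit_square z * W z)) 0)"
    by (auto simp: g1_def g2_def fun_eq_iff indicator_def max_def)
  then have g1: "integrable lborel g1" and g2: "integrable lborel g2"
    using W by simp_all
  define M1 where "M1 = distr (density lborel (\<lambda>z. ennreal (g1 z))) borel T"
  define M2 where "M2 = distr (density lborel (\<lambda>z. ennreal (g2 z))) borel T"
  have "(LINT z:unit_square|M1. f z) - (LINT z:unit_square|M2. f z)
      = (LINT z|lborel. indicator unit_square z * W z * f (T z))"
    if f: "continuous_on unit_square f" for f
    using set_integral_distr_density_unit_square[OF g1 _ T T_into, of f, folded M1_def]
      set_integral_distr_density_unit_square[OF g2 _ T T_into, of f, folded M2_def]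
      integrable_mult_continuous_on_comp_unit_square[OF g1 f T T_into]
      integrable_mult_continuous_on_comp_unit_square[OF g2 f T T_into] f
    by (simp add: g1_def g2_def W_split left_diff_distrib)
  moreover have "finite_meas_on_square M1" "finite_meas_on_square M2"
    using finite_meas_on_square_distr_density[OF g1 _ T T_into]
      finite_meas_on_square_distr_density[OF g2 _ T T_into]
    by (simp_all add: M1_def M2_def g1_def g2_def)
  ultimately show ?thesis by blast
qed


lemma borel_measurable_flow_velocity:
  assumes v: "L2_H10 v w" and flow: "lagrangian_flow v \<phi>"
  shows "(\<lambda>z. indicator unit_square z * v (fst z) (\<phi> (fst z) (snd z))) \<in> borel_measurable borel"
proof -
  define P where "P z = (fst z, indicator unit_square z * \<phi> (fst z) (snd z))" for z :: "real \<times> real"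
  have "(\<lambda>z. indicator unit_square z * \<phi> (fst z) (snd z)) \<in> borel_measurable borel"
    using lagrangian_flow_mono[OF flow] lagrangian_flow_continuous[OF flow]
    by (intro borel_measurable_caratheodory_unit_square borel_measurable_mono_on_indicator) auto
  moreover have "fst \<in> (borel :: (real \<times> real) measure) \<rightarrow>\<^sub>M borel"
    by (intro borel_measurable_continuous_onI continuous_intros)
  ultimately have "P \<in> borel \<rightarrow>\<^sub>M borel \<Otimes>\<^sub>M borel"
    unfolding P_def by (intro measurable_Pair)
  from measurable_compose[OF this[unfolded borel_prod] L2_H10_borel_measurable[OF v]]
  have "(\<lambda>z. indicator unit_square z * (indicator unit_square (P z) * v (fst (P z)) (snd (P z))))
      \<in> borel_measurable borel"
    by simp
  moreover have "indicator unit_square z * (indicator unit_square (P z) * v (fst (P z)) (snd (P z)))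
      = indicator unit_square z * v (fst z) (\<phi> (fst z) (snd z))" for z
    using lagrangian_flow_range[OF flow, of "fst z" "snd z"]
    by (cases "z \<in> unit_square") (auto simp: P_def mem_Times_iff)
  ultimately show ?thesis by simp
qed

lemma integrable_flow_velocity_mult:
  fixes g :: "real \<times> real \<Rightarrow> real"
  assumes v: "L2_H10 v w" and flow: "lagrangian_flow v \<phi>"
    and g: "g \<in> borel_measurable borel" and g_bound: "\<And>z. z \<in> unit_square \<Longrightarrow> \<bar>g z\<bar> \<le> C"
  shows "integrable (lborel \<Otimes>\<^sub>M lborel) (\<lambda>(t, x). indicator unit_square (t, x) * (v t (\<phi> t x) * g (t, x)))"
proof (rule lborel_pair.integrable_product_bound)
  \<comment> \<open>\<open>\<bar>v t y\<bar> \<le> W t\<close> for a.e. t, and W is integrable because w is\<close>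
  define W where "W t = (LINT y|lborel. \<bar>indicator unit_square (t, y) * w t y\<bar>)" for t
  have "integrable (lborel \<Otimes>\<^sub>M lborel) (\<lambda>z. \<bar>indicator unit_square z * w (fst z) (snd z)\<bar>)"
    using L2_H10_integrable[OF v] by (simp add: lborel_prod)
  from lborel_pair.integrable_fst'[OF this]
  show "integrable lborel (\<lambda>t. C * W t)"
    by (simp add: W_def)
  show "integrable lborel (\<lambda>x. indicator {0..1::real} x :: real)"
    using borel_integrable_compact[OF compact_Icc, of 0 1 "\<lambda>_. 1::real"] by simp
  show "(\<lambda>(t, x). indicator unit_square (t, x) * (v t (\<phi> t x) * g (t, x))) \<in> borel_measurable (lborel \<Otimes>\<^sub>M lborel)"
    using borel_measurable_times[OF borel_measurable_flow_velocity[OF v flow] g]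
    by (simp add: lborel_prod split_beta' mult.assoc)
  have C: "0 \<le> C" using g_bound[of "(0, 0)"] by simp
  have W_nonneg: "0 \<le> W t" for t
    unfolding W_def by (rule integral_nonneg_AE) auto
  show "AE t in lborel. \<forall>x\<in>space lborel.
      \<bar>(\<lambda>(t, x). indicator unit_square (t, x) * (v t (\<phi> t x) * g (t, x))) (t, x)\<bar>
        \<le> \<bar>C * W t\<bar> * \<bar>indicator {0..1} x\<bar>"
    using L2_H10_AE_primitive[OF v]
  proof eventually_elim
    case (elim t)
    show ?case
    proof (intro ballI)
      fix x
      show "\<bar>(\<lambda>(t, x). indicator unit_square (t, x) * (v t (\<phi> t x) * g (t, x))) (t, x)\<bar>
        \<le> \<bar>C * W t\<bar> * \<bar>indicator {0..1} x\<bar>"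
      proof (cases "t \<in> {0..1} \<and> x \<in> {0..1}")
        case True
        then have \<phi>: "\<phi> t x \<in> {0..1}" using lagrangian_flow_range[OF flow] by blast
        have "\<bar>v t (\<phi> t x)\<bar> \<le> (LINT s:{0..1}|lborel. \<bar>w t s\<bar>)"
          using elim True \<phi> abs_set_integral_subset_le[of lborel "{0..1}" "w t" "{0..\<phi> t x}"] by auto
        also have "\<dots> = W t"
          using True by (simp add: W_def set_lebesgue_integral_def indicator_def mem_Times_iff abs_mult)
        finally have "\<bar>v t (\<phi> t x)\<bar> * \<bar>g (t, x)\<bar> \<le> W t * C"
          using True g_bound[of "(t, x)"] C by (intro mult_mono) auto
        then show ?thesis
          using True C W_nonneg[of t] by (simp add: abs_mult mult.commute)
      qed (auto simp: mem_Times_iff)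
    qed
  qed
qed


lemma flow_integration_by_parts_time:
  fixes fx fxt :: "real \<times> real \<Rightarrow> real"
  assumes v: "L2_H10 v w" and flow: "lagrangian_flow v \<phi>"
    and deriv: "\<And>t x. ((\<lambda>s. fx (s, x)) has_real_derivative fxt (t, x)) (at t)"
    and cont_fx: "continuous_on UNIV fx" and cont_fxt: "continuous_on UNIV fxt"
    and fx0: "\<And>x. fx (0, x) = 0" and fx1: "\<And>x. fx (1, x) = 0"
  shows "(LINT z:unit_square|lborel. \<phi> (fst z) (snd z) * fxt z)
    = - (\<integral>(t, x). indicator unit_square (t, x) * (v t (\<phi> t x) * fx (t, x)) \<partial>(lborel \<Otimes>\<^sub>M lborel))"
proof -
  define F where "F t x = indicator unit_square (t, x) * (\<phi> t x * fxt (t, x))" for t x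
  define G where "G t x = indicator unit_square (t, x) * (v t (\<phi> t x) * fx (t, x))" for t x
  obtain C where C: "\<And>z. z \<in> unit_square \<Longrightarrow> \<bar>fx z\<bar> \<le> C"
    using continuous_on_compact_abs_bound[OF continuous_on_subset[OF cont_fx] compact_unit_square] by blast
  have G: "integrable (lborel \<Otimes>\<^sub>M lborel) (case_prod G)"
    unfolding G_def by (rule integrable_flow_velocity_mult[OF v flow borel_measurable_continuous_onI[OF cont_fx] C])
  obtain C' where C': "\<And>z. z \<in> unit_square \<Longrightarrow> \<bar>fxt z\<bar> \<le> C'"
    using continuous_on_compact_abs_bound[OF continuous_on_subset[OF cont_fxt] compact_unit_square] by blast
  have F: "integrable (lborel \<Otimes>\<^sub>M lborel) (case_prod F)"
  proof (rule lborel_pair.integrable_product_bound)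
    have "(\<lambda>z. indicator unit_square z * \<phi> (fst z) (snd z)) \<in> borel_measurable borel"
      using lagrangian_flow_mono[OF flow] lagrangian_flow_continuous[OF flow]
      by (intro borel_measurable_caratheodory_unit_square borel_measurable_mono_on_indicator) auto
    from borel_measurable_times[OF this borel_measurable_continuous_onI[OF cont_fxt]]
    show "case_prod F \<in> borel_measurable (lborel \<Otimes>\<^sub>M lborel)"
      by (simp add: F_def lborel_prod split_beta' mult.assoc)
    show "integrable lborel (\<lambda>t. indicator {0..1::real} t * C' :: real)"
      and "integrable lborel (\<lambda>x. indicator {0..1::real} x :: real)"
      using borel_integrable_compact[OF compact_Icc, of 0 1 "\<lambda>_. C'"]
        borel_integrable_compact[OF compact_Icc, of 0 1 "\<lambda>_. 1::real"] by (simp_all add: mult.commute)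
    have "\<bar>F t x\<bar> \<le> \<bar>indicator {0..1} t * C'\<bar> * \<bar>indicator {0..1} x\<bar>" for t x
    proof (cases "(t, x) \<in> unit_square")
      case True
      then have "\<bar>\<phi> t x\<bar> * \<bar>fxt (t, x)\<bar> \<le> 1 * C'"
        using lagrangian_flow_range[OF flow, of t x] C'[OF True] by (intro mult_mono) auto
      then show ?thesis using True C'[OF True] by (simp add: F_def abs_mult)
    qed (simp add: F_def)
    then show "AE t in lborel. \<forall>x\<in>space lborel. \<bar>case_prod F (t, x)\<bar> \<le> \<bar>indicator {0..1} t * C'\<bar> * \<bar>indicator {0..1} x\<bar>"
      by simp
  qed
  have slice: "(LINT t|lborel. F t x) = - (LINT t|lborel. G t x)" for x
  proof (cases "x \<in> {0..1}")
    case True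
    have "(LINT t:{0..1}|lborel. \<phi> t x * fxt (t, x)) = - (LINT t:{0..1}|lborel. v t (\<phi> t x) * fx (t, x))"
    proof (rule integration_by_parts_primitive)
      show "continuous_on {0..1} (\<lambda>t. fxt (t, x))"
        by (rule continuous_on_compose2[OF cont_fxt]) (auto intro: continuous_intros)
      show "((\<lambda>t. fx (t, x)) has_real_derivative fxt (t, x)) (at t)" for t
        by (rule deriv)
    qed (fact lagrangian_flow_integrable[OF flow True] lagrangian_flow_primitive[OF flow _ True] fx0 fx1)+
    then show ?thesis
      using True by (simp add: F_def G_def set_lebesgue_integral_def indicator_def mem_Times_iff)
  qed (simp add: F_def G_def mem_Times_iff)
  have "(LINT z:unit_square|lborel. \<phi> (fst z) (snd z) * fxt z) = integral\<^sup>L (lborel \<Otimes>\<^sub>M lborel) (case_prod F)"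
    by (simp add: set_lebesgue_integral_def F_def lborel_prod split_beta')
  also have "\<dots> = (LINT x|lborel. LINT t|lborel. F t x)"
    by (simp add: lborel_pair.integral_snd[OF F])
  also have "\<dots> = - (LINT x|lborel. LINT t|lborel. G t x)"
    by (simp add: slice)
  also have "(LINT x|lborel. LINT t|lborel. G t x) = integral\<^sup>L (lborel \<Otimes>\<^sub>M lborel) (case_prod G)"
    by (simp add: lborel_pair.integral_snd[OF G])
  finally show ?thesis
    unfolding G_def[abs_def] .
qed


lemma flow_integration_by_parts_space:
  fixes f fx :: "real \<times> real \<Rightarrow> real"
  assumes v: "L2_H10 v w" and flow: "lagrangian_flow v \<phi>"
    and deriv: "\<And>t y. ((\<lambda>y. f (t, y)) has_real_derivative fx (t, y)) (at y)"
    and cont_f: "continuous_on UNIV f" and cont_fx: "continuous_on UNIV fx"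
    and f1: "\<And>t. f (t, 1) = 0"
  shows "(\<integral>(t, x). indicator unit_square (t, x) * (v t (\<phi> t x) * fx (t, x)) \<partial>(lborel \<Otimes>\<^sub>M lborel))
    = - (LINT z|lborel. indicator unit_square z * w (fst z) (snd z) * f (gen_inv_map \<phi> z))"
proof -
  define G where "G t x = indicator unit_square (t, x) * (v t (\<phi> t x) * fx (t, x))" for t x
  define H where "H t y = indicator unit_square (t, y) * w t y * f (gen_inv_map \<phi> (t, y))" for t y
  obtain C where C: "\<And>z. z \<in> unit_square \<Longrightarrow> \<bar>fx z\<bar> \<le> C"
    using continuous_on_compact_abs_bound[OF continuous_on_subset[OF cont_fx] compact_unit_square] by blast
  have G: "integrable (lborel \<Otimes>\<^sub>M lborel) (case_prod G)"
    unfolding G_def by (rule integrable_flow_velocity_mult[OF v flow borel_measurable_continuous_onI[OF cont_fx] C])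
  have "integrable lborel (\<lambda>z. indicator unit_square z * w (fst z) (snd z) * f (gen_inv_map \<phi> z))"
    by (rule integrable_mult_continuous_on_comp_unit_square[OF L2_H10_integrable[OF v]
          continuous_on_subset[OF cont_f] borel_measurable_gen_inv_map[OF flow] gen_inv_map_in_unit_square]) simp
  then have H: "integrable (lborel \<Otimes>\<^sub>M lborel) (case_prod H)"
    by (simp add: H_def lborel_prod split_beta')
  have slices: "AE t in lborel. (LINT x|lborel. G t x) = - (LINT y|lborel. H t y)"
    using L2_H10_AE_primitive[OF v]
  proof eventually_elim
    case (elim t)
    show ?case
    proof (cases "t \<in> {0..1}")
      case True
      have "(LINT x:{0..1}|lborel. v t (\<phi> t x) * fx (t, x))
          = - (LINT y:{0..1}|lborel. w t y * f (t, gen_inv \<phi> t y))"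
      proof (rule set_integral_primitive_comp_mult_deriv)
        show "continuous_on {0..1} (\<lambda>x. fx (t, x))"
          by (rule continuous_on_compose2[OF cont_fx]) (auto intro: continuous_intros)
        show "((\<lambda>y. f (t, y)) has_real_derivative fx (t, x)) (at x)" for x
          by (rule deriv)
      qed (use elim True lagrangian_flow_mono[OF flow True] lagrangian_flow_range[OF flow True] f1 in auto)
      moreover have "H t y = indicator {0..1} y * (w t y * f (t, gen_inv \<phi> t y))" for y
        using True by (auto simp: H_def gen_inv_map_def indicator_def mem_Times_iff)
      ultimately show ?thesis
        using True by (simp add: G_def set_lebesgue_integral_def indicator_def mem_Times_iff)
    next
      case False
      then have "indicator unit_square (t, y) = (0::real)" for y
        by (auto simp: indicator_def mem_Times_iff)
      then show ?thesis by (simp add: G_def H_def)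
    qed
  qed
  have "integral\<^sup>L (lborel \<Otimes>\<^sub>M lborel) (case_prod G) = (LINT t|lborel. LINT x|lborel. G t x)"
    by (simp add: lborel_pair.integral_fst[OF G])
  also have "\<dots> = (LINT t|lborel. - (LINT y|lborel. H t y))"
  proof (rule integral_cong_AE)
    show "(\<lambda>t. LINT x|lborel. G t x) \<in> borel_measurable lborel"
      using lborel.borel_measurable_lebesgue_integral[OF borel_measurable_integrable[OF G]] by simp
    show "(\<lambda>t. - (LINT y|lborel. H t y)) \<in> borel_measurable lborel"
      using lborel.borel_measurable_lebesgue_integral[OF borel_measurable_integrable[OF H]] by simp
  qed (fact slices)
  also have "\<dots> = - integral\<^sup>L (lborel \<Otimes>\<^sub>M lborel) (case_prod H)"
    by (simp add: lborel_pair.integral_fst[OF H])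
  finally show ?thesis
    by (simp add: G_def[abs_def] H_def[abs_def] lborel_prod split_beta')
qed


lemma test_fun_partials:
  assumes "test_fun f"
  obtains fx fxt where
    "\<And>t y. ((\<lambda>y. f (t, y)) has_real_derivative fx (t, y)) (at y)"
    "\<And>t x. ((\<lambda>s. fx (s, x)) has_real_derivative fxt (t, x)) (at t)"
    "continuous_on UNIV f" "continuous_on UNIV fx" "continuous_on UNIV fxt"
proof -
  have "Ck_on (Suc (Suc 0)) UNIV f"
    using assms by (simp add: test_fun_def numeral_2_eq_2)
  then obtain fx fxt where "continuous_on UNIV f" "continuous_on UNIV fx" "continuous_on UNIV fxt"
    and "\<And>z. ((\<lambda>y. f (fst z, y)) has_real_derivative fx z) (at (snd z))"
    and "\<And>z. ((\<lambda>s. fx (s, snd z)) has_real_derivative fxt z) (at (fst z))"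
    by auto
  then show ?thesis
    using that by (metis fst_conv snd_conv)
qed

lemma test_fun_imp_continuous_on: "test_fun f \<Longrightarrow> continuous_on unit_square f"
  by (metis test_fun_partials continuous_on_subset top_greatest)

lemma C2_square_imp_continuous_on: "C2_square f \<Longrightarrow> continuous_on unit_square f"
  by (auto simp: C2_square_def numeral_2_eq_2 intro: continuous_on_subset)

lemma test_fun_flow_mixed_derivative:
  assumes v: "L2_H10 v w" and flow: "lagrangian_flow v \<phi>" and f: "test_fun f"
  shows "(LINT z:unit_square|lborel. \<phi> (fst z) (snd z) * pt (px f) z)
    = (LINT z|lborel. indicator unit_square z * w (fst z) (snd z) * f (gen_inv_map \<phi> z))"
proof -
  obtain fx fxt where
    d_y: "\<And>t y. ((\<lambda>y. f (t, y)) has_real_derivative fx (t, y)) (at y)" and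
    d_t: "\<And>t x. ((\<lambda>s. fx (s, x)) has_real_derivative fxt (t, x)) (at t)" and
    cont: "continuous_on UNIV f" "continuous_on UNIV fx" "continuous_on UNIV fxt"
    using test_fun_partials[OF f] by blast
  have support: "f z = 0" if "z \<notin> {0<..<1} \<times> {0<..<1}" for z
    using f that unfolding test_fun_def by (metis subsetD)
  have "pt (px f) = fxt"
    using DERIV_imp_deriv[OF d_y] DERIV_imp_deriv[OF d_t] by (simp add: pt_def px_def fun_eq_iff)
  moreover have "fx (t, x) = 0" if "t \<in> {0, 1}" for t x
  proof -
    have "(\<lambda>y. f (t, y)) = (\<lambda>y. 0)"
      using support that by (auto simp: mem_Times_iff)
    then have "((\<lambda>y. f (t, y)) has_real_derivative 0) (at x)"
      by simp
    then show ?thesis using DERIV_unique d_y by blast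
  qed
  moreover have "f (t, 1) = 0" for t
    by (simp add: support mem_Times_iff)
  ultimately show ?thesis
    using flow_integration_by_parts_time[OF v flow d_t cont(2,3)]
      flow_integration_by_parts_space[OF v flow d_y cont(1,2)]
    by simp
qed

lemma indicator_mult_gen_inv_map:
  fixes W f :: "real \<times> real \<Rightarrow> real"
  shows "indicator unit_square z * W z * f (gen_inv_map \<phi> z)
    = indicator unit_square z * (W z * f (fst z, gen_inv \<phi> (fst z) (snd z)))"
  by (cases "z \<in> unit_square") (simp_all add: gen_inv_map_def)

theorem mainTheorem8:
  fixes v w \<phi> :: "real \<Rightarrow> real \<Rightarrow> real"
  assumes v: "L2_H10 v w"
    and flow: "lagrangian_flow v \<phi>"
  shows "\<exists>M1 M2. finite_meas_on_square M1 \<and> finite_meas_on_square M2 \<and>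
     (\<forall>f. test_fun f \<longrightarrow>
        (LINT z:unit_square|lborel. \<phi> (fst z) (snd z) * pt (px f) z)
          = (LINT z:unit_square|M1. f z) - (LINT z:unit_square|M2. f z)) \<and>
     (\<forall>f. C2_square f \<longrightarrow>
        set_integrable lborel unit_square
          (\<lambda>z. w (fst z) (snd z) * f (fst z, gen_inv \<phi> (fst z) (snd z))) \<and>
        (LINT z:unit_square|lborel. w (fst z) (snd z) * f (fst z, gen_inv \<phi> (fst z) (snd z)))
          = (LINT z:unit_square|M1. f z) - (LINT z:unit_square|M2. f z))"
proof -
  note W = L2_H10_integrable[OF v] and T = borel_measurable_gen_inv_map[OF flow] gen_inv_map_in_unit_square
  obtain M1 M2 where M: "finite_meas_on_square M1" "finite_meas_on_square M2"
    and push: "\<And>f. continuous_on unit_square f \<Longrightarrow>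
      (LINT z:unit_square|M1. f z) - (LINT z:unit_square|M2. f z)
        = (LINT z|lborel. indicator unit_square z * w (fst z) (snd z) * f (gen_inv_map \<phi> z))"
    using ex_finite_meas_on_square_pushforward[OF W T] by blast
  show ?thesis
  proof (intro exI conjI allI impI)
    fix f assume "test_fun f"
    then show "(LINT z:unit_square|lborel. \<phi> (fst z) (snd z) * pt (px f) z)
        = (LINT z:unit_square|M1. f z) - (LINT z:unit_square|M2. f z)"
      using test_fun_flow_mixed_derivative[OF v flow] push test_fun_imp_continuous_on by simp
  next
    fix f assume "C2_square f"
    then have f: "continuous_on unit_square f"
      by (rule C2_square_imp_continuous_on)
    show "set_integrable lborel unit_square (\<lambda>z. w (fst z) (snd z) * f (fst z, gen_inv \<phi> (fst z) (snd z)))"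
      using integrable_mult_continuous_on_comp_unit_square[OF W f T]
      by (simp add: set_integrable_def indicator_mult_gen_inv_map[where W = "\<lambda>z. w (fst z) (snd z)"])
    show "(LINT z:unit_square|lborel. w (fst z) (snd z) * f (fst z, gen_inv \<phi> (fst z) (snd z)))
        = (LINT z:unit_square|M1. f z) - (LINT z:unit_square|M2. f z)"
      using push[OF f] by (simp add: set_lebesgue_integral_def indicator_mult_gen_inv_map[where W = "\<lambda>z. w (fst z) (snd z)"])
  qed (fact M)+
qed

end
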